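(* Under Assumptions A1–A3 (with constant $p$), the operator $T$ has a fixed point in $\mathcal H_p$ if and only if there exist $g_0,h\in\mathcal H_p$ such that $T^ng_0\to h$ in $L_p(\pi)$ as $n\to\infty$.
   Context: Standing setting: $\{X_t\}_{t\ge0}$ is a stationary Markov process on a separable completely metrizable space $\mathsf X$ with transition kernel $\Pi$ and stationary law $\pi$; $\{\eta_t\}$ iid with law $\nu$ on $\mathsf W$, independent of $\{X_t\}$; $\phi,g\ge0$ Borel on $\mathsf X\times\mathsf X\times\mathsf W$ with $\Phi_{t+1}=\phi(X_t,X_{t+1},\eta_{t+1})$, $G_{t+1}=g(X_t,X_{t+1},\eta_{t+1})$. $\mathcal H_p$ is the set of nonnegative functions in $L_p(\pi)$. Valuation operator $Vh(x)=\int h(y)[\int\phi(x,y,\eta)\nu(d\eta)]\Pi(x,dy)$; $\hat g(x)=\int\int\phi g\,d\nu\,\Pi(x,dy)$; $Th=Vh+\hat g$. A1: $\phi>0$ everywhere and $G_t>0$ with positive probability. A2: for all Borel $B$ with $\pi(B)>0$ and all $x$, $\Pi^n(x,B)>0$ for some $n$. A3: for some $p\ge1$, $\hat g\in\mathcal H_p$ and $V$ maps $L_p(\pi)$ into itself with some power $V^i$ compact. *)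

theory Defs
  imports "HOL-Probability.Probability"
begin

section \<open>L_p(pi) for real-valued functions (functions, equality up to pi-null sets)\<close>

definition Lp_mem :: "'a measure \<Rightarrow> real \<Rightarrow> ('a \<Rightarrow> real) \<Rightarrow> bool" where
  "Lp_mem M p f \<longleftrightarrow> f \<in> borel_measurable M \<and> integrable M (\<lambda>x. \<bar>f x\<bar> powr p)"

definition Lp_norm :: "'a measure \<Rightarrow> real \<Rightarrow> ('a \<Rightarrow> real) \<Rightarrow> real" where
  "Lp_norm M p f = (\<integral>x. \<bar>f x\<bar> powr p \<partial>M) powr (1 / p)"

definition Hp :: "'a measure \<Rightarrow> real \<Rightarrow> ('a \<Rightarrow> real) \<Rightarrow> bool" where
  "Hp M p f \<longleftrightarrow> Lp_mem M p f \<and> (AE x in M. 0 \<le> f x)"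

fun kernel_pow :: "('a::topological_space \<Rightarrow> 'a measure) \<Rightarrow> nat \<Rightarrow> 'a \<Rightarrow> 'a measure" where
  "kernel_pow K 0 = (\<lambda>x. return borel x)"
| "kernel_pow K (Suc n) = (\<lambda>x. K x \<bind> kernel_pow K n)"

definition phihat :: "'w measure \<Rightarrow> ('x \<Rightarrow> 'x \<Rightarrow> 'w \<Rightarrow> real) \<Rightarrow> 'x \<Rightarrow> 'x \<Rightarrow> ennreal" where
  "phihat \<nu> \<phi> x y = (\<integral>\<^sup>+ \<eta>. ennreal (\<phi> x y \<eta>) \<partial>\<nu>)"

definition Vop :: "('x \<Rightarrow> 'x measure) \<Rightarrow> 'w measure \<Rightarrow> ('x \<Rightarrow> 'x \<Rightarrow> 'w \<Rightarrow> real)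
    \<Rightarrow> ('x \<Rightarrow> real) \<Rightarrow> 'x \<Rightarrow> real" where
  "Vop K \<nu> \<phi> h x = (\<integral>y. h y * enn2real (phihat \<nu> \<phi> x y) \<partial>(K x))"

definition ghat_enn :: "('x \<Rightarrow> 'x measure) \<Rightarrow> 'w measure \<Rightarrow> ('x \<Rightarrow> 'x \<Rightarrow> 'w \<Rightarrow> real)
    \<Rightarrow> ('x \<Rightarrow> 'x \<Rightarrow> 'w \<Rightarrow> real) \<Rightarrow> 'x \<Rightarrow> ennreal" where
  "ghat_enn K \<nu> \<phi> g x = (\<integral>\<^sup>+ y. (\<integral>\<^sup>+ \<eta>. ennreal (\<phi> x y \<eta> * g x y \<eta>) \<partial>\<nu>) \<partial>(K x))"

definition ghat :: "('x \<Rightarrow> 'x measure) \<Rightarrow> 'w measure \<Rightarrow> ('x \<Rightarrow> 'x \<Rightarrow> 'w \<Rightarrow> real)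
    \<Rightarrow> ('x \<Rightarrow> 'x \<Rightarrow> 'w \<Rightarrow> real) \<Rightarrow> 'x \<Rightarrow> real" where
  "ghat K \<nu> \<phi> g x = enn2real (ghat_enn K \<nu> \<phi> g x)"

definition Top :: "('x \<Rightarrow> 'x measure) \<Rightarrow> 'w measure \<Rightarrow> ('x \<Rightarrow> 'x \<Rightarrow> 'w \<Rightarrow> real)
    \<Rightarrow> ('x \<Rightarrow> 'x \<Rightarrow> 'w \<Rightarrow> real) \<Rightarrow> ('x \<Rightarrow> real) \<Rightarrow> 'x \<Rightarrow> real" where
  "Top K \<nu> \<phi> g h x = Vop K \<nu> \<phi> h x + ghat K \<nu> \<phi> g x"

definition standing_setting :: "'x::polish_space measure \<Rightarrow> ('x \<Rightarrow> 'x measure) \<Rightarrow> 'w measure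
    \<Rightarrow> ('x \<Rightarrow> 'x \<Rightarrow> 'w \<Rightarrow> real) \<Rightarrow> ('x \<Rightarrow> 'x \<Rightarrow> 'w \<Rightarrow> real) \<Rightarrow> bool" where
  "standing_setting \<pi> K \<nu> \<phi> g \<longleftrightarrow>
     prob_space \<pi> \<and> sets \<pi> = sets borel \<and>
     K \<in> borel \<rightarrow>\<^sub>M prob_algebra borel \<and>
     (\<forall>B\<in>sets borel. emeasure \<pi> B = (\<integral>\<^sup>+ x. emeasure (K x) B \<partial>\<pi>)) \<and>
     prob_space \<nu> \<and>
     (\<lambda>(x, y, \<eta>). \<phi> x y \<eta>) \<in> borel_measurable (borel \<Otimes>\<^sub>M borel \<Otimes>\<^sub>M \<nu>) \<and>
     (\<lambda>(x, y, \<eta>). g x y \<eta>) \<in> borel_measurable (borel \<Otimes>\<^sub>M borel \<Otimes>\<^sub>M \<nu>) \<and>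
     (\<forall>x y \<eta>. 0 \<le> \<phi> x y \<eta>) \<and> (\<forall>x y \<eta>. 0 \<le> g x y \<eta>)"

text \<open>A1: phi > 0 everywhere and P(G_t > 0) > 0, where (X_t, X_{t+1}, eta_{t+1}) has
  joint law pi(dx) Pi(x,dy) nu(d eta).\<close>
definition A1 :: "'x::polish_space measure \<Rightarrow> ('x \<Rightarrow> 'x measure) \<Rightarrow> 'w measure
    \<Rightarrow> ('x \<Rightarrow> 'x \<Rightarrow> 'w \<Rightarrow> real) \<Rightarrow> ('x \<Rightarrow> 'x \<Rightarrow> 'w \<Rightarrow> real) \<Rightarrow> bool" where
  "A1 \<pi> K \<nu> \<phi> g \<longleftrightarrow>
     (\<forall>x y \<eta>. 0 < \<phi> x y \<eta>) \<and>
     0 < (\<integral>\<^sup>+ x. (\<integral>\<^sup>+ y. (\<integral>\<^sup>+ \<eta>. indicator {\<eta>. 0 < g x y \<eta>} \<eta> \<partial>\<nu>) \<partial>(K x)) \<partial>\<pi>)"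

definition A2 :: "'x::polish_space measure \<Rightarrow> ('x \<Rightarrow> 'x measure) \<Rightarrow> bool" where
  "A2 \<pi> K \<longleftrightarrow>
     (\<forall>B\<in>sets borel. 0 < measure \<pi> B \<longrightarrow> (\<forall>x. \<exists>n\<ge>1. 0 < measure (kernel_pow K n x) B))"

definition compact_Lp_op :: "'a measure \<Rightarrow> real \<Rightarrow> (('a \<Rightarrow> real) \<Rightarrow> ('a \<Rightarrow> real)) \<Rightarrow> bool" where
  "compact_Lp_op M p A \<longleftrightarrow>
     (\<forall>hs :: nat \<Rightarrow> 'a \<Rightarrow> real. (\<forall>n. Lp_mem M p (hs n)) \<and> bounded (range (\<lambda>n. Lp_norm M p (hs n))) \<longrightarrow>
        (\<exists>(r :: nat \<Rightarrow> nat) (f :: 'a \<Rightarrow> real). strict_mono r \<and> Lp_mem M p f \<and>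
           (\<lambda>n. Lp_norm M p (\<lambda>x. A (hs (r n)) x - f x)) \<longlonglongrightarrow> 0))"

text \<open>A3 (with constant p): ghat in H_p; V maps L_p(pi) into itself (the defining
  integral converges absolutely for pi-a.e. x and Vh lies in L_p); some power of V compact.\<close>
definition A3 :: "'x::polish_space measure \<Rightarrow> ('x \<Rightarrow> 'x measure) \<Rightarrow> 'w measure
    \<Rightarrow> ('x \<Rightarrow> 'x \<Rightarrow> 'w \<Rightarrow> real) \<Rightarrow> ('x \<Rightarrow> 'x \<Rightarrow> 'w \<Rightarrow> real) \<Rightarrow> real \<Rightarrow> bool" where
  "A3 \<pi> K \<nu> \<phi> g p \<longleftrightarrow>
     1 \<le> p \<and>
     (AE x in \<pi>. ghat_enn K \<nu> \<phi> g x < \<infinity>) \<and> Hp \<pi> p (ghat K \<nu> \<phi> g) \<and>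
     (\<forall>h. Lp_mem \<pi> p h \<longrightarrow>
        (AE x in \<pi>. (\<integral>\<^sup>+ y. ennreal \<bar>h y\<bar> * phihat \<nu> \<phi> x y \<partial>(K x)) < \<infinity>) \<and>
        Lp_mem \<pi> p (Vop K \<nu> \<phi> h)) \<and>
     (\<exists>i. compact_Lp_op \<pi> p (Vop K \<nu> \<phi> ^^ i))"

end

theory Submission
  imports Defs
begin

text \<open>If \<open>h\<close> is a fixed point of \<open>T\<close>, the constant orbit \<open>g\<^sub>0 = h\<close> converges.
  Conversely, suppose \<open>T\<^sup>n g\<^sub>0 \<rightarrow> h\<close> in \<open>L\<^sub>p(\<pi>)\<close>. Along a subsequence both \<open>T\<^sup>n g\<^sub>0\<close> and
  \<open>T\<^sup>n\<^sup>+\<^sup>1 g\<^sub>0\<close> converge to \<open>h\<close> \<open>\<pi>\<close>-a.e.; by stationarity a \<open>\<pi>\<close>-null set is \<open>\<Pi>(x,\<cdot>)\<close>-null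
  for \<open>\<pi>\<close>-a.e. \<open>x\<close>, so Fatou's lemma under \<open>\<Pi>(x,\<cdot>)\<close> gives \<open>Th \<le> h\<close>. As \<open>T\<close> is monotone,
  the iterates \<open>T\<^sup>n 0\<close> increase and stay below \<open>h\<close>; their pointwise limit is dominated by \<open>h\<close>,
  hence in \<open>H\<^sub>p\<close>, and is a fixed point by dominated convergence.\<close>

lemma abs_add_powr_le:
  fixes a b p :: real
  assumes "0 \<le> p"
  shows "\<bar>a + b\<bar> powr p \<le> 2 powr p * (\<bar>a\<bar> powr p + \<bar>b\<bar> powr p)"
proof -
  have "\<bar>a + b\<bar> powr p \<le> (2 * max \<bar>a\<bar> \<bar>b\<bar>) powr p"
    using assms by (intro powr_mono2) auto
  also have "\<dots> = 2 powr p * max \<bar>a\<bar> \<bar>b\<bar> powr p"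
    by (simp add: powr_mult)
  also have "\<dots> \<le> 2 powr p * (\<bar>a\<bar> powr p + \<bar>b\<bar> powr p)"
    by (intro mult_left_mono) (auto simp: max_def)
  finally show ?thesis .
qed

lemma Lp_mem_zero: "Lp_mem M p (\<lambda>_. 0)"
  by (simp add: Lp_mem_def)

lemma Lp_mem_dominated:
  assumes "0 \<le> p" "u \<in> borel_measurable M" "Lp_mem M p h" "AE x in M. \<bar>u x\<bar> \<le> \<bar>h x\<bar>"
  shows "Lp_mem M p u"
  unfolding Lp_mem_def
proof
  show "integrable M (\<lambda>x. \<bar>u x\<bar> powr p)"
  proof (rule Bochner_Integration.integrable_bound)
    show "integrable M (\<lambda>x. \<bar>h x\<bar> powr p)"
      using assms(3) by (simp add: Lp_mem_def)
    show "AE x in M. norm (\<bar>u x\<bar> powr p) \<le> norm (\<bar>h x\<bar> powr p)"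
      using assms(4) by eventually_elim (use assms(1) in \<open>auto intro: powr_mono2\<close>)
  qed (use assms(2) in measurable)
qed fact

lemma Lp_mem_add:
  assumes "0 \<le> p" "Lp_mem M p a" "Lp_mem M p b"
  shows "Lp_mem M p (\<lambda>x. a x + b x)"
proof -
  have [measurable]: "a \<in> borel_measurable M" "b \<in> borel_measurable M"
    using assms by (auto simp: Lp_mem_def)
  have "integrable M (\<lambda>x. \<bar>a x + b x\<bar> powr p)"
  proof (rule Bochner_Integration.integrable_bound)
    show "integrable M (\<lambda>x. 2 powr p * (\<bar>a x\<bar> powr p + \<bar>b x\<bar> powr p))"
      using assms by (simp add: Lp_mem_def)
    show "AE x in M. norm (\<bar>a x + b x\<bar> powr p) \<le> norm (2 powr p * (\<bar>a x\<bar> powr p + \<bar>b x\<bar> powr p))"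
      using abs_add_powr_le[OF assms(1)] by auto
  qed measurable
  then show ?thesis by (simp add: Lp_mem_def)
qed

lemma Lp_mem_diff:
  assumes "0 \<le> p" "Lp_mem M p a" "Lp_mem M p b"
  shows "Lp_mem M p (\<lambda>x. a x - b x)"
  using Lp_mem_add[OF assms(1,2), of "\<lambda>x. - b x"] assms(3) by (simp add: Lp_mem_def)

lemma Lp_norm_eq_0_AE:
  assumes "AE x in M. f x = 0"
  shows "Lp_norm M p f = 0"
proof -
  have "(\<integral>x. \<bar>f x\<bar> powr p \<partial>M) = 0"
    using assms by (intro integral_eq_zero_AE) (auto elim!: eventually_mono)
  then show ?thesis by (simp add: Lp_norm_def)
qed

lemma Lp_norm_tendsto_0_imp_AE_subseq:
  assumes p: "0 < p" and v: "\<And>n. Lp_mem M p (v n)"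
    and lim: "(\<lambda>n. Lp_norm M p (v n)) \<longlonglongrightarrow> 0"
  shows "\<exists>r. strict_mono r \<and> (AE x in M. (\<lambda>n. v (r n) x) \<longlonglongrightarrow> 0)"
proof -
  have "(\<integral>x. \<bar>v n x\<bar> powr p \<partial>M) = Lp_norm M p (v n) powr p" for n
    using p by (simp add: Lp_norm_def powr_powr integral_nonneg_AE)
  moreover have "(\<lambda>n. Lp_norm M p (v n) powr p) \<longlonglongrightarrow> 0"
    using p by (intro tendsto_zero_powrI[OF lim tendsto_const]) (auto simp: Lp_norm_def)
  ultimately have "(\<lambda>n. \<integral>x. norm (\<bar>v n x\<bar> powr p) \<partial>M) \<longlonglongrightarrow> 0"
    by simp
  moreover have "integrable M (\<lambda>x. \<bar>v n x\<bar> powr p)" for n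
    using v by (simp add: Lp_mem_def)
  ultimately obtain r where r: "strict_mono r" "AE x in M. (\<lambda>n. \<bar>v (r n) x\<bar> powr p) \<longlonglongrightarrow> 0"
    using tendsto_L1_AE_subseq[of M "\<lambda>n x. \<bar>v n x\<bar> powr p"] by auto
  have "AE x in M. (\<lambda>n. v (r n) x) \<longlonglongrightarrow> 0"
    using r(2)
  proof eventually_elim
    case (elim x)
    have "(\<lambda>n. (\<bar>v (r n) x\<bar> powr p) powr (1 / p)) \<longlonglongrightarrow> 0"
      using p by (intro tendsto_zero_powrI[OF elim tendsto_const]) auto
    then show ?case
      using p by (simp add: powr_powr tendsto_rabs_zero_iff)
  qed
  with r(1) show ?thesis by blast
qed

lemma Lp_tendsto_imp_AE_subseq_Suc:
  assumes p: "0 < p" and v: "\<And>n. Lp_mem M p (v n)" and h: "Lp_mem M p h"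
    and lim: "(\<lambda>n. Lp_norm M p (\<lambda>x. v n x - h x)) \<longlonglongrightarrow> 0"
  shows "\<exists>r. strict_mono r \<and>
    (AE x in M. (\<lambda>n. v (r n) x) \<longlonglongrightarrow> h x \<and> (\<lambda>n. v (Suc (r n)) x) \<longlonglongrightarrow> h x)"
proof -
  have diff: "Lp_mem M p (\<lambda>x. v n x - h x)" for n
    using p v h by (intro Lp_mem_diff) auto
  obtain r where r: "strict_mono r" "AE x in M. (\<lambda>n. v (r n) x - h x) \<longlonglongrightarrow> 0"
    using Lp_norm_tendsto_0_imp_AE_subseq[OF p diff lim] by blast
  have "(\<lambda>n. Lp_norm M p (\<lambda>x. v (Suc (r n)) x - h x)) \<longlonglongrightarrow> 0"
    using LIMSEQ_subseq_LIMSEQ[OF LIMSEQ_Suc[OF lim] r(1)] by (simp add: o_def)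
  then obtain s where s: "strict_mono s" "AE x in M. (\<lambda>n. v (Suc (r (s n))) x - h x) \<longlonglongrightarrow> 0"
    using Lp_norm_tendsto_0_imp_AE_subseq[OF p, where v="\<lambda>n x. v (Suc (r n)) x - h x"] diff
    by blast
  have "AE x in M. (\<lambda>n. v (r (s n)) x) \<longlonglongrightarrow> h x \<and> (\<lambda>n. v (Suc (r (s n))) x) \<longlonglongrightarrow> h x"
    using r(2) s(2)
  proof eventually_elim
    case (elim x)
    then show ?case
      using LIMSEQ_subseq_LIMSEQ[OF elim(1) s(1)] by (simp add: o_def LIM_zero_iff)
  qed
  moreover have "strict_mono (r \<circ> s)"
    using r(1) s(1) by (rule strict_mono_o)
  ultimately show ?thesis by (auto simp: o_def)
qed

lemma integral_le_of_tendsto_AE_nonneg: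
  fixes u :: "nat \<Rightarrow> 'a \<Rightarrow> real"
  assumes u: "\<And>n. integrable M (u n)" and f: "f \<in> borel_measurable M"
    and nonneg: "AE x in M. \<forall>n. 0 \<le> u n x"
    and lim: "AE x in M. (\<lambda>n. u n x) \<longlonglongrightarrow> f x"
    and integral_lim: "(\<lambda>n. \<integral>x. u n x \<partial>M) \<longlonglongrightarrow> l"
  shows "(\<integral>x. f x \<partial>M) \<le> l"
proof -
  have f_nonneg: "AE x in M. 0 \<le> f x"
    using nonneg lim by eventually_elim (auto intro: LIMSEQ_le_const)
  have integral_nonneg: "0 \<le> (\<integral>x. u n x \<partial>M)" for n
    using nonneg by (auto intro: integral_nonneg_AE elim!: eventually_mono)
  have "(\<integral>\<^sup>+ x. ennreal (f x) \<partial>M) = (\<integral>\<^sup>+ x. liminf (\<lambda>n. ennreal (u n x)) \<partial>M)"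
    using lim by (intro nn_integral_cong_AE)
      (auto elim!: eventually_mono intro!: lim_imp_Liminf[symmetric] tendsto_ennrealI)
  also have "\<dots> \<le> liminf (\<lambda>n. \<integral>\<^sup>+ x. ennreal (u n x) \<partial>M)"
    using u by (intro nn_integral_liminf) auto
  also have "\<dots> = liminf (\<lambda>n. ennreal (\<integral>x. u n x \<partial>M))"
    using u nonneg by (intro arg_cong[where f=liminf] ext nn_integral_eq_integral)
      (auto elim!: eventually_mono)
  also have "\<dots> = ennreal l"
    by (intro lim_imp_Liminf tendsto_ennrealI integral_lim) simp
  finally show ?thesis
    using integral_eq_nn_integral[OF f f_nonneg] LIMSEQ_le_const[OF integral_lim]
      integral_nonneg by (auto intro: enn2real_leI)
qed

lemma AE_kernel_of_AE_stationary:
  fixes \<pi> :: "'a::topological_space measure"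
  assumes K: "K \<in> borel \<rightarrow>\<^sub>M prob_algebra borel" and sets_\<pi>: "sets \<pi> = sets borel"
    and stationary: "\<And>B. B \<in> sets borel \<Longrightarrow> emeasure \<pi> B = (\<integral>\<^sup>+ x. emeasure (K x) B \<partial>\<pi>)"
    and P: "AE x in \<pi>. P x"
  shows "AE x in \<pi>. AE y in K x. P y"
proof -
  obtain N where N: "{x \<in> space \<pi>. \<not> P x} \<subseteq> N" "emeasure \<pi> N = 0" "N \<in> sets borel"
    using P sets_\<pi> by (auto elim!: AE_E)
  have sets_K: "sets (K x) = sets borel" for x
    using measurable_space[OF K] by (simp add: space_prob_algebra)
  have "(\<lambda>x. emeasure (K x) N) \<in> borel_measurable \<pi>"
    using measurable_emeasure_subprob_algebra[OF N(3)] measurable_prob_algebraD[OF K]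
    by (simp add: measurable_cong_sets[OF sets_\<pi> refl])
  moreover have "(\<integral>\<^sup>+ x. emeasure (K x) N \<partial>\<pi>) = 0"
    using stationary[OF N(3)] N(2) by simp
  ultimately have "AE x in \<pi>. emeasure (K x) N = 0"
    by (simp add: nn_integral_0_iff_AE)
  then show ?thesis
  proof (rule eventually_mono)
    fix x assume "emeasure (K x) N = 0"
    then have "N \<in> null_sets (K x)"
      using N(3) sets_K by (simp add: null_sets_def)
    moreover have "{y \<in> space (K x). \<not> P y} \<subseteq> N"
      using N(1) sets_eq_imp_space_eq[OF sets_K] sets_eq_imp_space_eq[OF sets_\<pi>] by auto
    ultimately show "AE y in K x. P y"
      by (rule AE_I')
  qed
qed

locale valuation_setting =
  fixes \<pi> :: "'x::polish_space measure" and K :: "'x \<Rightarrow> 'x measure"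
    and \<nu> :: "'w measure" and \<phi> g :: "'x \<Rightarrow> 'x \<Rightarrow> 'w \<Rightarrow> real" and p :: real
  assumes standing: "standing_setting \<pi> K \<nu> \<phi> g"
    and A3: "A3 \<pi> K \<nu> \<phi> g p"
begin

abbreviation T where "T \<equiv> Top K \<nu> \<phi> g"
abbreviation V where "V \<equiv> Vop K \<nu> \<phi>"

definition discount :: "'x \<Rightarrow> 'x \<Rightarrow> real" where
  "discount x y = enn2real (phihat \<nu> \<phi> x y)"

lemma sets_\<pi> [measurable_cong]: "sets \<pi> = sets borel"
  and kernel: "K \<in> borel \<rightarrow>\<^sub>M prob_algebra borel"
  and stationary: "B \<in> sets borel \<Longrightarrow> emeasure \<pi> B = (\<integral>\<^sup>+ x. emeasure (K x) B \<partial>\<pi>)"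
  and prob_space_\<nu>: "prob_space \<nu>"
  and \<phi>_measurable: "(\<lambda>(x, y, \<eta>). \<phi> x y \<eta>) \<in> borel_measurable (borel \<Otimes>\<^sub>M borel \<Otimes>\<^sub>M \<nu>)"
  using standing by (auto simp: standing_setting_def)

lemma sets_K [measurable_cong]: "sets (K x) = sets borel"
  using measurable_space[OF kernel] by (simp add: space_prob_algebra)

lemma measurable_\<pi> [simp]: "measurable \<pi> N = measurable borel N"
  by (rule measurable_cong_sets[OF sets_\<pi> refl])

lemma AE_kernel: "AE x in \<pi>. P x \<Longrightarrow> AE x in \<pi>. AE y in K x. P y"
  by (rule AE_kernel_of_AE_stationary[OF kernel sets_\<pi> stationary])

lemma p_pos: "0 < p"
  using A3 by (simp add: A3_def)

lemma Hp_ghat: "Hp \<pi> p (ghat K \<nu> \<phi> g)"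
  and Lp_mem_Vop: "Lp_mem \<pi> p h \<Longrightarrow> Lp_mem \<pi> p (V h)"
  and Vop_abs_finite: "Lp_mem \<pi> p h \<Longrightarrow>
    AE x in \<pi>. (\<integral>\<^sup>+ y. ennreal \<bar>h y\<bar> * phihat \<nu> \<phi> x y \<partial>(K x)) < \<infinity>"
  using A3 by (auto simp: A3_def)

lemma Lp_mem_measurable: "Lp_mem \<pi> p h \<Longrightarrow> h \<in> borel_measurable borel"
  by (simp add: Lp_mem_def)

lemma discount_measurable [measurable]: "discount x \<in> borel_measurable borel"
proof -
  interpret \<nu>: prob_space \<nu>
    by (rule prob_space_\<nu>)
  have "(\<lambda>(y, \<eta>). ennreal (\<phi> x y \<eta>)) \<in> borel_measurable (borel \<Otimes>\<^sub>M \<nu>)"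
    using measurable_compose[OF _ \<phi>_measurable, of "\<lambda>(y, \<eta>). (x, y, \<eta>)"]
    by (simp add: case_prod_beta')
  then show ?thesis
    unfolding discount_def[abs_def] phihat_def
    by (intro borel_measurable_enn2real \<nu>.borel_measurable_nn_integral)
qed

lemma discount_nonneg: "0 \<le> discount x y"
  by (simp add: discount_def)

lemma Vop_eq: "V h x = (\<integral>y. h y * discount x y \<partial>K x)"
  by (simp add: Vop_def discount_def)

lemma integrable_kernel:
  assumes "Lp_mem \<pi> p h"
  shows "AE x in \<pi>. integrable (K x) (\<lambda>y. h y * discount x y)"
  using Vop_abs_finite[OF assms]
proof eventually_elim
  case (elim x)
  have [measurable]: "h \<in> borel_measurable borel"
    using Lp_mem_measurable[OF assms] .
  show ?case
  proof (rule integrableI_bounded)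
    have "(\<integral>\<^sup>+ y. ennreal (norm (h y * discount x y)) \<partial>K x)
        \<le> (\<integral>\<^sup>+ y. ennreal \<bar>h y\<bar> * phihat \<nu> \<phi> x y \<partial>K x)"
      by (intro nn_integral_mono)
        (auto simp: discount_def abs_mult ennreal_mult ennreal_enn2real_if intro: mult_left_mono)
    then show "(\<integral>\<^sup>+ y. ennreal (norm (h y * discount x y)) \<partial>K x) < \<infinity>"
      using elim by (rule le_less_trans)
  qed measurable
qed

lemma ghat_nonneg: "0 \<le> ghat K \<nu> \<phi> g x"
  by (simp add: ghat_def)

lemma Top_eq: "T h x = V h x + ghat K \<nu> \<phi> g x"
  by (simp add: Top_def)

lemma Lp_mem_Top: "Lp_mem \<pi> p h \<Longrightarrow> Lp_mem \<pi> p (T h)"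
  using Hp_ghat p_pos unfolding Top_def Hp_def by (auto intro: Lp_mem_add Lp_mem_Vop)

lemma Lp_mem_Top_iterate: "Lp_mem \<pi> p h \<Longrightarrow> Lp_mem \<pi> p ((T ^^ n) h)"
  by (induction n) (auto intro: Lp_mem_Top)

lemma Top_mono:
  assumes "Lp_mem \<pi> p a" "Lp_mem \<pi> p b" "AE x in \<pi>. 0 \<le> a x \<and> a x \<le> b x"
  shows "AE x in \<pi>. 0 \<le> T a x \<and> T a x \<le> T b x"
  using AE_kernel[OF assms(3)] integrable_kernel[OF assms(2)]
proof eventually_elim
  case (elim x)
  have "0 \<le> V a x"
    using elim(1) by (auto simp: Vop_eq discount_nonneg intro!: integral_nonneg_AE elim!: eventually_mono)
  moreover have "V a x \<le> V b x"
    unfolding Vop_eq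
  proof (rule integral_mono_AE'[OF elim(2)])
    show "AE y in K x. a y * discount x y \<le> b y * discount x y"
      using elim(1) by eventually_elim (simp add: mult_right_mono discount_nonneg)
    show "AE y in K x. 0 \<le> b y * discount x y"
      using elim(1) by eventually_elim (simp add: discount_nonneg)
  qed
  ultimately show ?case
    by (simp add: Top_eq add_nonneg_nonneg ghat_nonneg)
qed

lemma Hp_Top_iterate: "Hp \<pi> p h \<Longrightarrow> Hp \<pi> p ((T ^^ n) h)"
proof (induction n)
  case (Suc n)
  then have "AE x in \<pi>. 0 \<le> T ((T ^^ n) h) x \<and> T ((T ^^ n) h) x \<le> T ((T ^^ n) h) x"
    by (intro Top_mono) (auto simp: Hp_def elim!: eventually_mono)
  with Suc show ?case
    by (auto simp: Hp_def intro: Lp_mem_Top elim!: eventually_mono)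
qed simp

lemma Top_cong_AE:
  assumes "Lp_mem \<pi> p a" "Lp_mem \<pi> p b" "AE x in \<pi>. a x = b x"
  shows "AE x in \<pi>. T a x = T b x"
  using AE_kernel[OF assms(3)]
proof eventually_elim
  case (elim x)
  have [measurable]: "a \<in> borel_measurable borel" "b \<in> borel_measurable borel"
    using assms(1,2) by (simp_all add: Lp_mem_measurable)
  have "V a x = V b x"
    unfolding Vop_eq
  proof (rule integral_cong_AE)
    show "AE y in K x. a y * discount x y = b y * discount x y"
      using elim by eventually_elim simp
  qed measurable
  then show ?case
    by (simp add: Top_eq)
qed

lemma Top_iterate_fixed_point:
  assumes h: "Hp \<pi> p h" and fixed: "AE x in \<pi>. T h x = h x"
  shows "AE x in \<pi>. (T ^^ n) h x = h x"
proof (induction n)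
  case (Suc n)
  have hL: "Lp_mem \<pi> p h"
    using h by (simp add: Hp_def)
  have "AE x in \<pi>. T ((T ^^ n) h) x = T h x"
    by (rule Top_cong_AE[OF Lp_mem_Top_iterate[OF hL] hL Suc])
  with fixed show ?case
    by eventually_elim simp
qed simp

lemma Top_iterates_of_fixed_point_converge:
  assumes "Hp \<pi> p h" "AE x in \<pi>. T h x = h x"
  shows "(\<lambda>n. Lp_norm \<pi> p (\<lambda>x. (T ^^ n) h x - h x)) \<longlonglongrightarrow> 0"
proof -
  have "Lp_norm \<pi> p (\<lambda>x. (T ^^ n) h x - h x) = 0" for n
    using Top_iterate_fixed_point[OF assms, of n] by (auto intro: Lp_norm_eq_0_AE elim: eventually_mono)
  then show ?thesis
    by simp
qed

lemma Top_le_of_AE_limit_along_subseq: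
  assumes g0: "Hp \<pi> p g0" and hL: "Lp_mem \<pi> p h"
    and lim: "AE x in \<pi>. (\<lambda>n. (T ^^ m n) g0 x) \<longlonglongrightarrow> h x \<and> (\<lambda>n. (T ^^ Suc (m n)) g0 x) \<longlonglongrightarrow> h x"
  shows "AE x in \<pi>. T h x \<le> h x"
proof -
  define f where "f n = (T ^^ n) g0" for n
  have f: "Hp \<pi> p (f n)" for n
    using Hp_Top_iterate[OF g0] by (simp add: f_def)
  then have fL: "Lp_mem \<pi> p (f n)" for n
    by (simp add: Hp_def)
  have [measurable]: "h \<in> borel_measurable borel"
    using Lp_mem_measurable[OF hL] .
  have nonneg: "AE x in \<pi>. \<forall>n. 0 \<le> f n x"
    using f by (simp add: Hp_def AE_all_countable)
  have integrable: "AE x in \<pi>. \<forall>n. integrable (K x) (\<lambda>y. f n y * discount x y)"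
    using integrable_kernel[OF fL] by (simp add: AE_all_countable)
  show ?thesis
    using AE_kernel[OF nonneg] AE_kernel[OF lim] integrable lim
  proof eventually_elim
    case (elim x)
    have step: "(\<integral>y. f k y * discount x y \<partial>K x) = f (Suc k) x - ghat K \<nu> \<phi> g x" for k
      by (simp add: f_def Top_eq Vop_eq)
    have "V h x \<le> h x - ghat K \<nu> \<phi> g x"
      unfolding Vop_eq
    proof (rule integral_le_of_tendsto_AE_nonneg[where u="\<lambda>n y. f (m n) y * discount x y"])
      show "AE y in K x. \<forall>n. 0 \<le> f (m n) y * discount x y"
        using elim(1) by eventually_elim (simp add: discount_nonneg)
      show "AE y in K x. (\<lambda>n. f (m n) y * discount x y) \<longlonglongrightarrow> h y * discount x y"
        using elim(2) by eventually_elim (auto simp: f_def intro: tendsto_mult_right)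
      show "(\<lambda>n. \<integral>y. f (m n) y * discount x y \<partial>K x) \<longlonglongrightarrow> h x - ghat K \<nu> \<phi> g x"
        unfolding step using elim(4) by (intro tendsto_diff) (auto simp: f_def)
    qed (use elim(3) in \<open>simp_all\<close>)
    then show ?case
      by (simp add: Top_eq)
  qed
qed

lemma Top_le_of_iterates_converge:
  assumes g0: "Hp \<pi> p g0" and h: "Hp \<pi> p h"
    and lim: "(\<lambda>n. Lp_norm \<pi> p (\<lambda>x. (T ^^ n) g0 x - h x)) \<longlonglongrightarrow> 0"
  shows "AE x in \<pi>. T h x \<le> h x"
proof -
  have hL: "Lp_mem \<pi> p h"
    using h by (simp add: Hp_def)
  have "Lp_mem \<pi> p ((T ^^ n) g0)" for n
    using Hp_Top_iterate[OF g0] by (simp add: Hp_def)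
  then obtain m where "AE x in \<pi>.
      (\<lambda>n. (T ^^ m n) g0 x) \<longlonglongrightarrow> h x \<and> (\<lambda>n. (T ^^ Suc (m n)) g0 x) \<longlonglongrightarrow> h x"
    using Lp_tendsto_imp_AE_subseq_Suc[where v="\<lambda>n. (T ^^ n) g0", OF p_pos _ hL lim] by blast
  then show ?thesis
    by (rule Top_le_of_AE_limit_along_subseq[OF g0 hL])
qed

lemma Top_iterate_zero_mono_below:
  assumes h: "Hp \<pi> p h" and super: "AE x in \<pi>. T h x \<le> h x"
  shows "AE x in \<pi>. 0 \<le> (T ^^ n) (\<lambda>_. 0) x \<and> (T ^^ n) (\<lambda>_. 0) x \<le> (T ^^ Suc n) (\<lambda>_. 0) x
    \<and> (T ^^ Suc n) (\<lambda>_. 0) x \<le> h x"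
proof (induction n)
  case 0
  have hL: "Lp_mem \<pi> p h"
    using h by (simp add: Hp_def)
  have "AE x in \<pi>. 0 \<le> T (\<lambda>_. 0) x \<and> T (\<lambda>_. 0) x \<le> T h x"
    using h by (intro Top_mono[OF Lp_mem_zero hL]) (auto simp: Hp_def elim: eventually_mono)
  with super show ?case
    by eventually_elim simp
next
  case (Suc n)
  let ?u = "\<lambda>n. (T ^^ n) (\<lambda>_. 0)"
  have uL: "Lp_mem \<pi> p (?u n)" for n
    by (rule Lp_mem_Top_iterate[OF Lp_mem_zero])
  have hL: "Lp_mem \<pi> p h"
    using h by (simp add: Hp_def)
  have "AE x in \<pi>. 0 \<le> T (?u n) x \<and> T (?u n) x \<le> T (?u (Suc n)) x"
    using Suc by (intro Top_mono[OF uL uL]) (auto elim: eventually_mono)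
  moreover have "AE x in \<pi>. 0 \<le> T (?u (Suc n)) x \<and> T (?u (Suc n)) x \<le> T h x"
    using Suc by (intro Top_mono[OF uL hL]) (auto elim: eventually_mono)
  ultimately show ?case
    using super by eventually_elim auto
qed

lemma Top_fixed_point_of_dominated_limit:
  assumes g0: "Lp_mem \<pi> p g0" and hL: "Lp_mem \<pi> p h"
    and F [measurable]: "F \<in> borel_measurable borel"
    and lim: "AE x in \<pi>. (\<forall>n. \<bar>(T ^^ n) g0 x\<bar> \<le> h x) \<and> (\<lambda>n. (T ^^ n) g0 x) \<longlonglongrightarrow> F x"
  shows "AE x in \<pi>. T F x = F x"
  using AE_kernel[OF lim] integrable_kernel[OF hL] lim
proof eventually_elim
  case (elim x)
  let ?u = "\<lambda>n. (T ^^ n) g0"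
  have [measurable]: "?u n \<in> borel_measurable borel" for n
    using Lp_mem_measurable[OF Lp_mem_Top_iterate[OF g0]] .
  have [measurable]: "h \<in> borel_measurable borel"
    using Lp_mem_measurable[OF hL] .
  have "(\<lambda>n. V (?u n) x) \<longlonglongrightarrow> V F x"
    unfolding Vop_eq
  proof (rule integral_dominated_convergence[OF _ _ elim(2)])
    show "AE y in K x. (\<lambda>n. ?u n y * discount x y) \<longlonglongrightarrow> F y * discount x y"
      using elim(1) by eventually_elim (auto intro: tendsto_mult_right)
    show "AE y in K x. norm (?u n y * discount x y) \<le> h y * discount x y" for n
      using elim(1) by eventually_elim (auto simp: abs_mult discount_nonneg intro: mult_right_mono)
  qed measurable
  moreover have "(\<lambda>n. V (?u n) x) \<longlonglongrightarrow> F x - ghat K \<nu> \<phi> g x"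
  proof -
    have "(\<lambda>n. T (?u n) x) \<longlonglongrightarrow> F x"
      using LIMSEQ_Suc[OF conjunct2[OF elim(3)]] by simp
    then have "(\<lambda>n. T (?u n) x - ghat K \<nu> \<phi> g x) \<longlonglongrightarrow> F x - ghat K \<nu> \<phi> g x"
      by (intro tendsto_diff tendsto_const)
    then show ?thesis
      by (simp add: Top_eq)
  qed
  ultimately have "V F x = F x - ghat K \<nu> \<phi> g x"
    by (rule LIMSEQ_unique)
  then show ?case
    by (simp add: Top_eq)
qed

lemma fixed_point_below_supersolution:
  assumes h: "Hp \<pi> p h" and super: "AE x in \<pi>. T h x \<le> h x"
  shows "\<exists>F. Hp \<pi> p F \<and> (AE x in \<pi>. T F x = F x)"
proof -
  define u where "u n = (T ^^ n) (\<lambda>_. 0)" for n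
  have hL: "Lp_mem \<pi> p h"
    using h by (simp add: Hp_def)
  have [measurable]: "u n \<in> borel_measurable borel" for n
    unfolding u_def by (rule Lp_mem_measurable[OF Lp_mem_Top_iterate[OF Lp_mem_zero]])
  define F where "F x = lim (\<lambda>n. u n x)" for x
  have [measurable]: "F \<in> borel_measurable borel"
    unfolding F_def by measurable
  have "AE x in \<pi>. \<forall>n. 0 \<le> u n x \<and> u n x \<le> u (Suc n) x \<and> u (Suc n) x \<le> h x"
    using Top_iterate_zero_mono_below[OF h super] by (simp add: u_def AE_all_countable)
  then have conv: "AE x in \<pi>. (\<forall>n. 0 \<le> u n x \<and> u n x \<le> h x) \<and> (\<lambda>n. u n x) \<longlonglongrightarrow> F x"
  proof eventually_elim
    case (elim x)
    then have bounds: "0 \<le> u n x \<and> u n x \<le> h x" for n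
      by (cases n) (auto intro: order_trans)
    have "(\<lambda>n. u n x) \<longlonglongrightarrow> (SUP n. u n x)"
      using elim bounds by (intro LIMSEQ_incseq_SUP bdd_aboveI2 incseq_SucI) auto
    then show ?case
      using bounds by (simp add: F_def limI)
  qed
  then have "AE x in \<pi>. 0 \<le> F x \<and> F x \<le> h x"
    by eventually_elim (auto intro: LIMSEQ_le_const LIMSEQ_le_const2)
  then have "Hp \<pi> p F"
    using p_pos by (auto simp: Hp_def intro!: Lp_mem_dominated[OF _ _ hL] elim: eventually_mono)
  moreover have "AE x in \<pi>. T F x = F x"
    using conv by (intro Top_fixed_point_of_dominated_limit[OF Lp_mem_zero hL])
      (auto simp: u_def elim!: eventually_mono)
  ultimately show ?thesis
    by blast
qed

end

theorem mainTheorem12: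
  fixes \<pi> :: "'x::polish_space measure" and K :: "'x \<Rightarrow> 'x measure"
    and \<nu> :: "'w measure" and \<phi> g :: "'x \<Rightarrow> 'x \<Rightarrow> 'w \<Rightarrow> real" and p :: real
  assumes "standing_setting \<pi> K \<nu> \<phi> g"
    and "A1 \<pi> K \<nu> \<phi> g"
    and "A2 \<pi> K"
    and "A3 \<pi> K \<nu> \<phi> g p"
  shows "(\<exists>h. Hp \<pi> p h \<and> (AE x in \<pi>. Top K \<nu> \<phi> g h x = h x)) \<longleftrightarrow>
         (\<exists>g0 h. Hp \<pi> p g0 \<and> Hp \<pi> p h \<and>
            (\<lambda>n. Lp_norm \<pi> p (\<lambda>x. (Top K \<nu> \<phi> g ^^ n) g0 x - h x)) \<longlonglongrightarrow> 0)"
proof -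
  interpret valuation_setting \<pi> K \<nu> \<phi> g p
    using assms(1,4) by unfold_locales
  show ?thesis
    using Top_iterates_of_fixed_point_converge
      fixed_point_below_supersolution[OF _ Top_le_of_iterates_converge] by blast
qed

end
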